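(* Let $\mathcal{G}=(\mathcal{V},\mathcal{E})$ and $\tilde{\mathcal{G}}=(\tilde{\mathcal{V}},\tilde{\mathcal{E}})$ be reaction networks such that $\mathcal{G}\sqsubseteq\tilde{\mathcal{G}}$. If $\tilde{\mathcal{G}}$ is endotactic, then $\mathcal{G}$ is endotactic. Moreover, if $\tilde{\mathcal{G}}$ is strongly endotactic, then $\mathcal{G}$ is strongly endotactic.
   Context: A reaction network (E-graph) $\mathcal{G}=(\mathcal{V},\mathcal{E})$ is a finite directed graph whose nodes are distinct elements of a finite set $Y\subset\mathbb{R}^d_{\ge 0}$, with $\mathcal{V}\neq\emptyset$, every node incident to at least one edge, and no edge from a node to itself. For an edge $e$, $\mathbf{s}(e)$ is its source node, $\mathbf{t}(e)$ its target, $\mathbf{v}(e)=\mathbf{t}(e)-\mathbf{s}(e)$. Given positive rate constants $\mathcal{K}=(k_e)$, $\mathcal{G}$ generates $\mathbf{f}_{\mathcal{G}(\mathcal{K})}(\mathbf{x})=\sum_{e}k_e\mathbf{x}^{\mathbf{s}(e)}\mathbf{v}(e)$ ($\mathbf{x}^{\mathbf{y}}=\prod_i x_i^{y_i}$, $0^0=1$). $\mathcal{G}\sqsubseteq\tilde{\mathcal{G}}$ means: for every positive rate constants $\mathcal{K}$ for $\mathcal{G}$ there exist positive rate constants $\tilde{\mathcal{K}}$ for $\tilde{\mathcal{G}}$ with $\mathbf{f}_{\tilde{\mathcal{G}}(\tilde{\mathcal{K}})}=\mathbf{f}_{\mathcal{G}(\mathcal{K})}$ identically. $\mathcal{G}$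 is endotactic if for every $\mathbf{w}\in\mathbb{R}^d$ and $e_i\in\mathcal{E}$ with $\mathbf{w}\cdot\mathbf{v}(e_i)<0$ there exists $e_j\in\mathcal{E}$ with $\mathbf{w}\cdot(\mathbf{s}(e_j)-\mathbf{s}(e_i))<0$ and $\mathbf{w}\cdot\mathbf{v}(e_j)>0$. It is strongly endotactic if moreover such $e_j$ can always be chosen so that additionally $\mathbf{w}\cdot(\mathbf{s}(e_j)-\mathbf{s}(e_k))\le 0$ for all $e_k\in\mathcal{E}$. *)

theory Defs
  imports "HOL-Analysis.Analysis"
begin

type_synonym 'd edge = "(real ^ 'd) \<times> (real ^ 'd)"

definition src :: "'d edge \<Rightarrow> real ^ 'd" where "src e = fst e"
definition tgt :: "'d edge \<Rightarrow> real ^ 'd" where "tgt e = snd e"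
definition rvec :: "'d edge \<Rightarrow> real ^ 'd" where "rvec e = tgt e - src e"

definition nonneg_orthant :: "(real ^ 'd::finite) set" where
  "nonneg_orthant = {x. \<forall>i. 0 \<le> x $ i}"

definition reaction_network :: "(real ^ 'd::finite) set \<Rightarrow> 'd edge set \<Rightarrow> bool" where
  "reaction_network V E \<longleftrightarrow>
     finite V \<and> V \<noteq> {} \<and> V \<subseteq> nonneg_orthant \<and> E \<subseteq> V \<times> V \<and>
     (\<forall>e\<in>E. src e \<noteq> tgt e) \<and>
     (\<forall>y\<in>V. \<exists>e\<in>E. y = src e \<or> y = tgt e)"

text \<open>Monomial x^y = prod_i x_i^y_i with the convention 0^0 = 1.\<close>
definition monom :: "real ^ 'd::finite \<Rightarrow> real ^ 'd \<Rightarrow> real" where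
  "monom x y = (\<Prod>i\<in>UNIV. if y $ i = 0 then 1 else (x $ i) powr (y $ i))"

definition gen_vf :: "'d::finite edge set \<Rightarrow> ('d edge \<Rightarrow> real) \<Rightarrow> real ^ 'd \<Rightarrow> real ^ 'd" where
  "gen_vf E k x = (\<Sum>e\<in>E. (k e * monom x (src e)) *\<^sub>R rvec e)"

text \<open>G is realized by G~: every positive choice of rate constants on G can be matched by
  positive rate constants on G~ generating the same vector field on the nonnegative orthant.\<close>
definition realizes_in :: "'d::finite edge set \<Rightarrow> 'd edge set \<Rightarrow> bool" where
  "realizes_in E E' \<longleftrightarrow>
     (\<forall>k. (\<forall>e\<in>E. 0 < k e) \<longrightarrow>
        (\<exists>k'. (\<forall>e\<in>E'. 0 < k' e) \<and> (\<forall>x\<in>nonneg_orthant. gen_vf E' k' x = gen_vf E k x)))"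

definition endotactic :: "'d::finite edge set \<Rightarrow> bool" where
  "endotactic E \<longleftrightarrow>
     (\<forall>w::real^'d. \<forall>ei\<in>E. w \<bullet> rvec ei < 0 \<longrightarrow>
        (\<exists>ej\<in>E. w \<bullet> (src ej - src ei) < 0 \<and> w \<bullet> rvec ej > 0))"

definition strongly_endotactic :: "'d::finite edge set \<Rightarrow> bool" where
  "strongly_endotactic E \<longleftrightarrow>
     (\<forall>w::real^'d. \<forall>ei\<in>E. w \<bullet> rvec ei < 0 \<longrightarrow>
        (\<exists>ej\<in>E. w \<bullet> (src ej - src ei) < 0 \<and> w \<bullet> rvec ej > 0 \<and>
                 (\<forall>ek\<in>E. w \<bullet> (src ej - src ek) \<le> 0)))"

end

theory Submission
  imports Defs
begin

text \<open>Along the curve \<open>x = exp (t u)\<close> the monomials \<open>x^y\<close> become exponentials \<open>exp (t (u \<bullet> y))\<close>,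
  whose rates are distinct for a generic direction \<open>u\<close>. Hence the vector field generated by a
  network determines, at every source complex \<open>y\<close>, the net reaction vector \<open>\<Sum> k\<^sub>e v(e)\<close> of the edges leaving \<open>y\<close>.
  If \<open>G \<sqsubseteq> G~\<close>, choosing the rates of \<open>G\<close> to blow up a single edge shows that an edge of \<open>G\<close> with
  \<open>w \<bullet> v < 0\<close> is matched by an edge of \<open>G~\<close> at the same source with \<open>w \<bullet> v < 0\<close>; conversely, at a
  source of \<open>G~\<close> where all edges have \<open>w \<bullet> v \<ge> 0\<close> and one has \<open>w \<bullet> v > 0\<close>, so does some edge of \<open>G\<close>.
  An endotactic \<open>G~\<close> has no edge with \<open>w \<bullet> v < 0\<close> at a \<open>w\<close>-minimal source among its edges with
  \<open>w \<bullet> v \<noteq> 0\<close>; transferring such a source to \<open>G\<close> yields the edge required by endotacticity of \<open>G\<close>.\<close>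

definition net_flux :: "'d::finite edge set \<Rightarrow> ('d edge \<Rightarrow> real) \<Rightarrow> real^'d \<Rightarrow> real^'d" where
  "net_flux E k y = (\<Sum>e\<in>{e\<in>E. src e = y}. k e *\<^sub>R rvec e)"

lemma gen_vf_eq_sum_net_flux:
  assumes "finite E" "finite Y" "src ` E \<subseteq> Y"
  shows "gen_vf E k x = (\<Sum>y\<in>Y. monom x y *\<^sub>R net_flux E k y)"
proof -
  have "gen_vf E k x = (\<Sum>e\<in>E. monom x (src e) *\<^sub>R (k e *\<^sub>R rvec e))"
    unfolding gen_vf_def by (simp add: mult.commute)
  also have "\<dots> = (\<Sum>y\<in>Y. \<Sum>e\<in>{e\<in>E. src e = y}. monom x (src e) *\<^sub>R (k e *\<^sub>R rvec e))"
    by (rule sum.group[OF assms, symmetric])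
  also have "\<dots> = (\<Sum>y\<in>Y. monom x y *\<^sub>R net_flux E k y)"
    unfolding net_flux_def scaleR_sum_right by (intro sum.cong refl) auto
  finally show ?thesis .
qed

lemma monom_exp_curve: "monom (\<chi> i. exp (t * u $ i)) y = exp (t * (u \<bullet> y))"
proof -
  have "monom (\<chi> i. exp (t * u $ i)) y = (\<Prod>i\<in>UNIV. exp (t * (u $ i * y $ i)))"
    unfolding monom_def by (intro prod.cong refl) (auto simp: powr_def algebra_simps)
  also have "\<dots> = exp (t * (u \<bullet> y))"
    by (simp add: exp_sum inner_vec_def sum_distrib_left)
  finally show ?thesis .
qed

lemma ex_inner_inj_on:
  fixes Y :: "'a::euclidean_space set"
  assumes "finite Y"
  shows "\<exists>u. inj_on (\<lambda>y. u \<bullet> y) Y"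
proof -
  let ?H = "\<Union>(a, b)\<in>Y \<times> Y - Id. {u. (a - b) \<bullet> u = 0}"
  have "negligible ?H"
    using assms by (intro negligible_Union) (auto intro!: negligible_hyperplane)
  then obtain u where "u \<notin> ?H"
    by (metis UNIV_eq_I non_negligible_UNIV)
  have "inj_on (\<lambda>y. u \<bullet> y) Y"
  proof (rule inj_onI, rule ccontr)
    fix a b assume "a \<in> Y" "b \<in> Y" "u \<bullet> a = u \<bullet> b" "a \<noteq> b"
    with \<open>u \<notin> ?H\<close> have "(a - b) \<bullet> u \<noteq> 0" by blast
    then have "a \<bullet> u \<noteq> b \<bullet> u" by (simp add: inner_diff_left)
    with \<open>u \<bullet> a = u \<bullet> b\<close> show False by (simp add: inner_commute)
  qed
  then show ?thesis ..
qed

lemma tendsto_exp_neg_rate_at_top: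
  assumes "d < (0::real)"
  shows "((\<lambda>t. exp (t * d)) \<longlongrightarrow> 0) at_top"
proof -
  have "filterlim (\<lambda>t. d * t) at_bot at_top"
    using assms by (intro filterlim_tendsto_neg_mult_at_bot[OF tendsto_const]) (auto intro: filterlim_ident)
  then show ?thesis
    unfolding mult.commute[of _ d]
    using exp_at_bot filterlim_compose by blast
qed

lemma exp_combination_eq_zero_imp_zero:
  fixes a :: "'a \<Rightarrow> real" and c :: "'a \<Rightarrow> 'v::real_normed_vector"
  assumes "finite Y" "inj_on a Y" "\<And>t. (\<Sum>y\<in>Y. exp (t * a y) *\<^sub>R c y) = 0"
  shows "\<forall>y\<in>Y. c y = 0"
  using assms
proof (induction Y rule: finite_ranking_induct[where f = a])
  case empty
  then show ?case by simp
next
  case (insert x S)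
  show ?case
  proof (cases "x \<in> S")
    case True
    with insert show ?thesis by (simp add: insert_absorb)
  next
    case False
    have rate_less: "a y < a x" if "y \<in> S" for y
      using insert.hyps(2)[OF that] insert.prems(1) that False
      by (metis insertI1 insertI2 inj_on_eq_iff order_le_less)
    have rescaled: "exp (- t * a x) *\<^sub>R (\<Sum>y\<in>insert x S. exp (t * a y) *\<^sub>R c y)
        = c x + (\<Sum>y\<in>S. exp (t * (a y - a x)) *\<^sub>R c y)" for t
      using False insert.hyps(1) by (simp add: scaleR_sum_right exp_add[symmetric] algebra_simps)
    have "((\<lambda>t. c x + (\<Sum>y\<in>S. exp (t * (a y - a x)) *\<^sub>R c y)) \<longlongrightarrow> c x + (\<Sum>y\<in>S. 0 *\<^sub>R c y)) at_top"
      using rate_less by (intro tendsto_intros tendsto_exp_neg_rate_at_top) simp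
    then have "((\<lambda>t::real. 0) \<longlongrightarrow> c x) at_top"
      using rescaled insert.prems(2) by simp
    then have "c x = 0"
      by (simp add: tendsto_const_iff[where F = at_top] del: tendsto_const_iff)
    moreover have "\<forall>y\<in>S. c y = 0"
      using insert.prems False insert.hyps(1) \<open>c x = 0\<close> by (intro insert.IH) auto
    ultimately show ?thesis by simp
  qed
qed

lemma net_flux_eq_if_gen_vf_eq:
  assumes "finite E" "finite E'"
    and gen_vf_eq: "\<forall>x\<in>nonneg_orthant. gen_vf E' k' x = gen_vf E k x"
  shows "net_flux E' k' y = net_flux E k y"
proof -
  define Y where "Y = insert y (src ` E \<union> src ` E')"
  have "finite Y" "src ` E \<subseteq> Y" "src ` E' \<subseteq> Y" using assms by (auto simp: Y_def)
  then obtain u :: "real^'a" where u: "inj_on (\<lambda>y. u \<bullet> y) Y"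
    using ex_inner_inj_on by blast
  have "(\<Sum>z\<in>Y. exp (t * (u \<bullet> z)) *\<^sub>R (net_flux E' k' z - net_flux E k z)) = 0" for t
  proof -
    let ?x = "\<chi> i. exp (t * u $ i)"
    have "gen_vf E' k' ?x - gen_vf E k ?x = 0"
      using gen_vf_eq by (simp add: nonneg_orthant_def)
    then show ?thesis
      using gen_vf_eq_sum_net_flux[OF assms(1) \<open>finite Y\<close> \<open>src ` E \<subseteq> Y\<close>]
        gen_vf_eq_sum_net_flux[OF assms(2) \<open>finite Y\<close> \<open>src ` E' \<subseteq> Y\<close>]
      by (simp add: monom_exp_curve scaleR_diff_right sum_subtractf)
  qed
  from exp_combination_eq_zero_imp_zero[OF \<open>finite Y\<close> u this] show ?thesis
    by (simp add: Y_def)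
qed

lemma realizes_in_net_flux:
  assumes "finite E" "finite E'" "realizes_in E E'" "\<forall>e\<in>E. 0 < k e"
  obtains k' where "\<forall>e\<in>E'. 0 < k' e" "\<And>y. net_flux E' k' y = net_flux E k y"
  using assms net_flux_eq_if_gen_vf_eq unfolding realizes_in_def by metis

lemma inner_net_flux: "w \<bullet> net_flux E k y = (\<Sum>e\<in>{e\<in>E. src e = y}. k e * (w \<bullet> rvec e))"
  unfolding net_flux_def by (simp add: inner_sum_right)

lemma inner_net_flux_nonneg:
  assumes "\<forall>e\<in>E. 0 < k e" "\<forall>e\<in>E. src e = y \<longrightarrow> 0 \<le> w \<bullet> rvec e"
  shows "0 \<le> w \<bullet> net_flux E k y"
  unfolding inner_net_flux using assms by (intro sum_nonneg) (simp add: less_imp_le)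

lemma inner_net_flux_pos:
  assumes "finite E" "\<forall>e\<in>E. 0 < k e" "\<forall>e\<in>E. src e = y \<longrightarrow> 0 \<le> w \<bullet> rvec e"
    and "e \<in> E" "src e = y" "0 < w \<bullet> rvec e"
  shows "0 < w \<bullet> net_flux E k y"
  unfolding inner_net_flux using assms by (intro sum_pos2[of _ e]) auto

lemma ex_pos_rates_inner_net_flux_neg:
  assumes "finite E" "e \<in> E" "w \<bullet> rvec e < 0"
  obtains k where "\<forall>e\<in>E. 0 < k e" "w \<bullet> net_flux E k (src e) < 0"
proof -
  define R where "R = (\<Sum>e'\<in>{e'\<in>E. src e' = src e} - {e}. w \<bullet> rvec e')"
  define M where "M = (\<bar>R\<bar> + 1) / - (w \<bullet> rvec e)"
  define k where "k = (\<lambda>e'. if e' = e then M else 1)"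
  have "0 < M" unfolding M_def using assms(3) by (intro divide_pos_pos) auto
  then have k_pos: "\<forall>e\<in>E. 0 < k e" by (simp add: k_def)
  have "w \<bullet> net_flux E k (src e) = M * (w \<bullet> rvec e) + R"
    unfolding inner_net_flux R_def using assms(1,2)
    by (subst sum.remove[of _ e]) (auto simp: k_def intro!: sum.cong)
  also have "\<dots> = R - (\<bar>R\<bar> + 1)"
    using assms(3) by (simp add: M_def)
  also have "\<dots> < 0" by simp
  finally show ?thesis using k_pos that by blast
qed

lemma realizes_in_ex_neg_edge_same_src:
  assumes "finite E" "finite E'" "realizes_in E E'" "e \<in> E" "w \<bullet> rvec e < 0"
  obtains e' where "e' \<in> E'" "src e' = src e" "w \<bullet> rvec e' < 0"
proof -
  obtain k where k: "\<forall>e\<in>E. 0 < k e" "w \<bullet> net_flux E k (src e) < 0"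
    using ex_pos_rates_inner_net_flux_neg[OF assms(1,4,5)] .
  obtain k' where "\<forall>e\<in>E'. 0 < k' e" "\<And>y. net_flux E' k' y = net_flux E k y"
    using realizes_in_net_flux[OF assms(1-3) k(1)] by blast
  with k(2) have "\<not> (\<forall>e'\<in>E'. src e' = src e \<longrightarrow> 0 \<le> w \<bullet> rvec e')"
    using inner_net_flux_nonneg[of E' k' "src e" w] by auto
  then show ?thesis using that by force
qed

lemma realizes_in_ex_pos_edge_same_src:
  assumes "finite E" "finite E'" "realizes_in E E'"
    and "e' \<in> E'" "0 < w \<bullet> rvec e'" "\<forall>e\<in>E'. src e = src e' \<longrightarrow> 0 \<le> w \<bullet> rvec e"
  obtains e where "e \<in> E" "src e = src e'" "0 < w \<bullet> rvec e"
proof -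
  obtain k' where k': "\<forall>e\<in>E'. 0 < k' e" "\<And>y. net_flux E' k' y = net_flux E (\<lambda>_. 1) y"
    using realizes_in_net_flux[OF assms(1-3), of "\<lambda>_. 1"] by auto
  have "0 < w \<bullet> net_flux E (\<lambda>_. 1) (src e')"
    using inner_net_flux_pos[OF assms(2) k'(1) assms(6,4) refl assms(5)] by (simp add: k'(2))
  then have "\<not> (\<forall>e\<in>E. src e = src e' \<longrightarrow> 0 \<le> - w \<bullet> rvec e)"
    using inner_net_flux_nonneg[of E "\<lambda>_. 1" "src e'" "- w"] by auto
  then show ?thesis using that by force
qed

lemma realizes_in_src_subset:
  assumes "finite E" "finite E'" "realizes_in E E'" "\<forall>e\<in>E. src e \<noteq> tgt e"
  shows "src ` E \<subseteq> src ` E'"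
proof
  fix y assume "y \<in> src ` E"
  then obtain e where e: "e \<in> E" "y = src e" by blast
  have "rvec e \<noteq> 0" using assms(4) e(1) by (force simp: rvec_def)
  then have "- rvec e \<bullet> rvec e < 0" by simp
  then obtain e' where "e' \<in> E'" "src e' = src e"
    using realizes_in_ex_neg_edge_same_src[OF assms(1-3) e(1)] by metis
  then show "y \<in> src ` E'" using e(2) by (metis image_eqI)
qed

lemma strongly_endotactic_imp_endotactic: "strongly_endotactic E \<Longrightarrow> endotactic E"
  unfolding strongly_endotactic_def endotactic_def by blast

lemma endotactic_inner_rvec_nonneg_at_min_src:
  assumes "endotactic E" "\<forall>e\<in>E. w \<bullet> rvec e \<noteq> 0 \<longrightarrow> w \<bullet> y \<le> w \<bullet> src e"
  shows "\<forall>e\<in>E. src e = y \<longrightarrow> 0 \<le> w \<bullet> rvec e"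
proof (intro ballI impI, rule ccontr)
  fix e assume "e \<in> E" "src e = y" "\<not> 0 \<le> w \<bullet> rvec e"
  then obtain e' where "e' \<in> E" "w \<bullet> (src e' - src e) < 0" "0 < w \<bullet> rvec e'"
    using assms(1) unfolding endotactic_def by (meson not_le)
  with \<open>src e = y\<close> assms(2) show False by (force simp: inner_diff_right)
qed

lemma endotactic_if_realizes_in:
  assumes "finite E" "finite E'" "realizes_in E E'" "endotactic E'"
  shows "endotactic E"
  unfolding endotactic_def
proof (intro allI ballI impI)
  fix w ei assume ei: "ei \<in> E" "w \<bullet> rvec ei < 0"
  obtain e'i where e'i: "e'i \<in> E'" "src e'i = src ei" "w \<bullet> rvec e'i < 0"
    using realizes_in_ex_neg_edge_same_src[OF assms(1-3) ei] .
  define S where "S = {e\<in>E'. w \<bullet> rvec e \<noteq> 0}"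
  define es where "es = arg_min_on (\<lambda>e. w \<bullet> src e) S"
  have "e'i \<in> S" using e'i by (simp add: S_def)
  moreover have "finite S" using assms(2) by (simp add: S_def)
  ultimately have S: "finite S" "S \<noteq> {}" by blast+
  have es_min: "w \<bullet> src es \<le> w \<bullet> src e" if "e \<in> S" for e
    using arg_min_least[OF S that] by (simp add: es_def)
  have "es \<in> S" using arg_min_if_finite(1)[OF S] by (simp add: es_def)
  then have es: "es \<in> E'" "w \<bullet> rvec es \<noteq> 0" by (simp_all add: S_def)
  have nonneg_at_es: "\<forall>e\<in>E'. src e = src es \<longrightarrow> 0 \<le> w \<bullet> rvec e"
    using es_min by (intro endotactic_inner_rvec_nonneg_at_min_src[OF assms(4)]) (simp add: S_def)
  with es have es_pos: "0 < w \<bullet> rvec es" by (metis order_le_neq_trans)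
  obtain ej where ej: "ej \<in> E'" "w \<bullet> (src ej - src e'i) < 0" "0 < w \<bullet> rvec ej"
    using assms(4) e'i(1,3) unfolding endotactic_def by blast
  then have "ej \<in> S" by (simp add: S_def)
  then have below: "w \<bullet> src es < w \<bullet> src ei"
    using es_min ej(2) e'i(2) by (fastforce simp: inner_diff_right)
  obtain e where "e \<in> E" "src e = src es" "0 < w \<bullet> rvec e"
    using realizes_in_ex_pos_edge_same_src[OF assms(1-3) es(1) es_pos nonneg_at_es] .
  with below show "\<exists>ej\<in>E. w \<bullet> (src ej - src ei) < 0 \<and> 0 < w \<bullet> rvec ej"
    by (intro bexI[of _ e]) (simp_all add: inner_diff_right)
qed

lemma strongly_endotactic_if_realizes_in:
  assumes "finite E" "finite E'" "realizes_in E E'" "\<forall>e\<in>E. src e \<noteq> tgt e"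
    and "strongly_endotactic E'"
  shows "strongly_endotactic E"
  unfolding strongly_endotactic_def
proof (intro allI ballI impI)
  fix w ei assume ei: "ei \<in> E" "w \<bullet> rvec ei < 0"
  obtain e'i where e'i: "e'i \<in> E'" "src e'i = src ei" "w \<bullet> rvec e'i < 0"
    using realizes_in_ex_neg_edge_same_src[OF assms(1-3) ei] .
  obtain es where es: "es \<in> E'" "w \<bullet> (src es - src e'i) < 0" "0 < w \<bullet> rvec es"
    and es_min: "\<forall>e\<in>E'. w \<bullet> (src es - src e) \<le> 0"
    using assms(5) e'i(1,3) unfolding strongly_endotactic_def by blast
  have nonneg_at_es: "\<forall>e\<in>E'. src e = src es \<longrightarrow> 0 \<le> w \<bullet> rvec e"
    using es_min strongly_endotactic_imp_endotactic[OF assms(5)]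
    by (intro endotactic_inner_rvec_nonneg_at_min_src) (auto simp: inner_diff_right)
  obtain e where e: "e \<in> E" "src e = src es" "0 < w \<bullet> rvec e"
    using realizes_in_ex_pos_edge_same_src[OF assms(1-3) es(1,3) nonneg_at_es] .
  have "\<forall>ek\<in>E. w \<bullet> (src e - src ek) \<le> 0"
    using realizes_in_src_subset[OF assms(1-4)] es_min e(2) by fastforce
  with e es(2) e'i(2) show "\<exists>ej\<in>E. w \<bullet> (src ej - src ei) < 0 \<and> 0 < w \<bullet> rvec ej \<and>
      (\<forall>ek\<in>E. w \<bullet> (src ej - src ek) \<le> 0)"
    by (intro bexI[of _ e]) simp_all
qed

lemma reaction_network_finite_edges: "reaction_network V E \<Longrightarrow> finite E"
  unfolding reaction_network_def by (meson finite_SigmaI finite_subset)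

theorem lemma3:
  fixes V V' :: "(real ^ 'd::finite) set" and E E' :: "'d edge set"
  assumes "reaction_network V E" and "reaction_network V' E'"
    and "realizes_in E E'"
  shows "(endotactic E' \<longrightarrow> endotactic E) \<and>
         (strongly_endotactic E' \<longrightarrow> strongly_endotactic E)"
proof -
  have "finite E" "finite E'"
    using assms(1,2) by (simp_all add: reaction_network_finite_edges)
  moreover have "\<forall>e\<in>E. src e \<noteq> tgt e"
    using assms(1) by (simp add: reaction_network_def)
  ultimately show ?thesis
    using assms(3) endotactic_if_realizes_in strongly_endotactic_if_realizes_in by blast
qed

end
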